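(* Let $0.5<p\le 1$, $q=1-p$ and $1-1/p\le\rho\le 0$, and set $s=\sqrt{-\rho pq}$. For a group of two contributors $u_a,u_b$, let $R_a\in\{1,-1\}$ be uniformly random and $R_b=-R_a$. Let $C_a,C_b$ be independent of each other and of $R_a$, each with distribution $\Pr[C=1.5]=p-s$, $\Pr[C=0.5]=s$, $\Pr[C=-0.5]=s$, $\Pr[C=-1.5]=q-s$. For $j\in\{a,b\}$ let $T_j=1$ if $C_j+R_j>0$ and $T_j=0$ if $C_j+R_j<0$. Then the joint distribution of $(T_a,T_b)$ is $\Pr[T_a=1,T_b=1]=p^2+\rho pq$, $\Pr[T_a=1,T_b=0]=\Pr[T_a=0,T_b=1]=(1-\rho)pq$, $\Pr[T_a=0,T_b=0]=q^2+\rho pq$.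
   Context: This describes the non-colluding-server instantiation of Joint Randomized Response: the server generates $R_a,R_b$ for each group, and each contributor generates $C_j$ locally; $T_j$ indicates whether contributor $u_j$ reports truthfully. *)

theory Defs
  imports "HOL-Probability.Probability_Mass_Function"
begin

definition jrr_T :: "real \<times> real \<times> real \<Rightarrow> bool \<times> bool" where
  "jrr_T = (\<lambda>(ra, ca, cb). (ca + ra > 0, cb + (- ra) > 0))"

end

theory Submission
  imports Defs
begin

text \<open>Given \<open>R\<^sub>a = r\<close>, the indicators \<open>T\<^sub>a = [C\<^sub>a > -r]\<close> and \<open>T\<^sub>b = [C\<^sub>b > r]\<close> are
  independent coins with biases \<open>p + r s\<close> and \<open>p - r s\<close>. Averaging over \<open>r = 1, -1\<close> gives
  \<open>Pr[T\<^sub>a = T\<^sub>b = 1] = (p + s)(p - s) = p\<^sup>2 - s\<^sup>2\<close> and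
  \<open>Pr[T\<^sub>a = 1, T\<^sub>b = 0] = ((p + s)(q + s) + (p - s)(q - s))/2 = p q + s\<^sup>2\<close>, where \<open>s\<^sup>2 = -\<rho> p q\<close>.\<close>

lemma map_pmf_eq_bernoulli_pmf:
  "map_pmf P M = bernoulli_pmf (measure_pmf.prob M {x. P x})"
proof (rule pmf_eqI)
  fix b :: bool
  have "measure_pmf.prob M {x. \<not> P x} = 1 - measure_pmf.prob M {x. P x}"
    using measure_pmf.prob_compl[of "{x. P x}" M] by (simp add: set_diff_eq)
  then show "pmf (map_pmf P M) b = pmf (bernoulli_pmf (measure_pmf.prob M {x. P x})) b"
    by (cases b) (simp_all add: pmf_map vimage_def)
qed

lemma set_pmf_subset_if_sum_pmf_eq_1:
  assumes "finite S" and "(\<Sum>x\<in>S. pmf M x) = 1"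
  shows "set_pmf M \<subseteq> S"
proof -
  have "measure_pmf.prob M S = 1"
    using assms by (simp add: measure_measure_pmf_finite)
  then have "AE x in measure_pmf M. x \<in> S"
    by (subst (asm) measure_pmf.prob_eq_1) auto
  then show ?thesis
    by (auto simp: AE_measure_pmf_iff)
qed

lemma measure_pmf_prob_eq_sum_Int:
  assumes "set_pmf M \<subseteq> S" and "finite S"
  shows "measure_pmf.prob M X = (\<Sum>x\<in>X \<inter> S. pmf M x)"
proof -
  have "measure_pmf.prob M X = measure_pmf.prob M (X \<inter> S)"
    using assms(1) by (intro measure_prob_cong_0) (auto simp: set_pmf_eq)
  then show ?thesis
    using assms(2) by (simp add: measure_measure_pmf_finite)
qed

lemma jrr_T_threshold_form: "jrr_T = (\<lambda>(r, a, b). (a > - r, b > r))"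
  by (auto simp: jrr_T_def fun_eq_iff)

lemma map_pmf_jrr_T_eq_bind_pmf:
  "map_pmf jrr_T (pair_pmf U (pair_pmf A B)) =
     bind_pmf U (\<lambda>r. pair_pmf (map_pmf (\<lambda>c. c > - r) A) (map_pmf (\<lambda>c. c > r) B))"
proof -
  have "map_pmf jrr_T (pair_pmf U (pair_pmf A B)) =
          bind_pmf U (\<lambda>r. map_pmf (\<lambda>(a, b). (a > - r, b > r)) (pair_pmf A B))"
    unfolding jrr_T_threshold_form
    by (simp add: pair_pmf_def map_pmf_def bind_assoc_pmf bind_return_pmf)
  then show ?thesis
    by (simp add: map_pair)
qed

lemma four_point_threshold_coins:
  fixes C :: "real pmf"
  assumes "pmf C (3/2) = p - s" and "pmf C (1/2) = s"
      and "pmf C (-1/2) = s" and "pmf C (-3/2) = 1 - p - s"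
  shows "map_pmf (\<lambda>c. c > -1) C = bernoulli_pmf (p + s)"
    and "map_pmf (\<lambda>c. c > 1) C = bernoulli_pmf (p - s)"
proof -
  define S where "S = {3/2, 1/2, -1/2, -3/2 :: real}"
  have "set_pmf C \<subseteq> S"
    using assms by (intro set_pmf_subset_if_sum_pmf_eq_1) (simp_all add: S_def)
  then have prob: "measure_pmf.prob C X = (\<Sum>x\<in>X \<inter> S. pmf C x)" for X
    by (rule measure_pmf_prob_eq_sum_Int) (simp add: S_def)
  have "{c. c > -1} \<inter> S = {3/2, 1/2, -1/2}" and "{c. c > 1} \<inter> S = {3/2}"
    by (auto simp: S_def)
  then have "measure_pmf.prob C {c. c > -1} = p + s" and "measure_pmf.prob C {c. c > 1} = p - s"
    using assms by (simp_all add: prob)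
  then show "map_pmf (\<lambda>c. c > -1) C = bernoulli_pmf (p + s)"
    and "map_pmf (\<lambda>c. c > 1) C = bernoulli_pmf (p - s)"
    unfolding map_pmf_eq_bernoulli_pmf by simp_all
qed

theorem theorem5:
  fixes p \<rho> :: real and C :: "real pmf"
  defines "q \<equiv> 1 - p"
  defines "s \<equiv> sqrt (- \<rho> * p * q)"
  assumes "1/2 < p" and "p \<le> 1" and "1 - 1/p \<le> \<rho>" and "\<rho> \<le> 0"
  assumes "pmf C (3/2) = p - s" and "pmf C (1/2) = s"
      and "pmf C (-1/2) = s" and "pmf C (-3/2) = q - s"
  defines "D \<equiv> map_pmf jrr_T (pair_pmf (pmf_of_set {1, -1 :: real}) (pair_pmf C C))"
  shows "pmf D (True, True) = p\<^sup>2 + \<rho> * p * q \<and>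
         pmf D (True, False) = (1 - \<rho>) * p * q \<and>
         pmf D (False, True) = (1 - \<rho>) * p * q \<and>
         pmf D (False, False) = q\<^sup>2 + \<rho> * p * q"
proof -
  note coins = four_point_threshold_coins[OF assms(7-9) assms(10)[unfolded q_def]]
  have bounds: "0 \<le> s" "0 \<le> p - s" "p + s \<le> 1"
    using pmf_nonneg[of C "1/2"] pmf_nonneg[of C "3/2"] pmf_nonneg[of C "-3/2"] assms(7,8,10)
    unfolding q_def by linarith+
  have s_squared: "s\<^sup>2 = - \<rho> * p * q"
    unfolding s_def q_def using assms(3,4,6)
    by (intro real_sqrt_pow2) (simp add: mult_nonneg_nonpos2 mult_nonpos_nonneg)
  have pmf_D: "pmf D (x, y) =
      (pmf (bernoulli_pmf (p + s)) x * pmf (bernoulli_pmf (p - s)) y +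
       pmf (bernoulli_pmf (p - s)) x * pmf (bernoulli_pmf (p + s)) y) / 2" for x y
    unfolding D_def map_pmf_jrr_T_eq_bind_pmf
    by (subst pmf_bind_pmf_of_set) (auto simp: coins pmf_pair)
  have "pmf D (True, True) = p\<^sup>2 - s\<^sup>2"
    using bounds by (simp add: pmf_D) (simp add: field_simps power2_eq_square)
  moreover have "pmf D (True, False) = p * q + s\<^sup>2" "pmf D (False, True) = p * q + s\<^sup>2"
    using bounds by (simp_all add: pmf_D q_def) (simp_all add: field_simps power2_eq_square)
  moreover have "pmf D (False, False) = q\<^sup>2 - s\<^sup>2"
    using bounds by (simp add: pmf_D q_def) (simp add: field_simps power2_eq_square)
  ultimately show ?thesis
    using s_squared by (simp add: algebra_simps)
qed

end
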